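(* Let $W\in\mathbb{R}^{m\times n}$, $x_1,x_2\in\mathbb{R}^n$, $\ell(t)=(1-t)x_1+tx_2$, and let $0=t_1\le t_2\le\dots\le t_{n_t}=1$. Writing $x_{t_k}=\ell(t_k)$, we have $$\sum_{k=1}^{n_t-1}\|\operatorname{ReLU}(Wx_{t_k})-\operatorname{ReLU}(Wx_{t_{k+1}})\|_2^2\le\|\operatorname{ReLU}(Wx_1)-\operatorname{ReLU}(Wx_2)\|_2^2$$ and $$\sum_{k=1}^{n_t-1}\|\operatorname{ReLU}(Wx_{t_k})-\operatorname{ReLU}(Wx_{t_{k+1}})\|_2\le\sqrt{n_t}\,\|\operatorname{ReLU}(Wx_1)-\operatorname{ReLU}(Wx_2)\|_2.$$
   Context: $\operatorname{ReLU}(y)=\max(y,0)$ applied componentwise. *)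

theory Defs
  imports "HOL-Analysis.Analysis"
begin

definition relu :: "real ^ 'm \<Rightarrow> real ^ 'm" where
  "relu y = (\<chi> i. max (y $ i) 0)"

definition seg :: "real ^ 'n \<Rightarrow> real ^ 'n \<Rightarrow> real \<Rightarrow> real ^ 'n" where
  "seg x1 x2 t = (1 - t) *\<^sub>R x1 + t *\<^sub>R x2"

end

theory Submission
  imports Defs
begin

text \<open>Each coordinate of \<open>relu (W *v seg x1 x2 s)\<close> is \<open>max (affine function of s) 0\<close>, hence a
  monotone or antitone function of \<open>s\<close>. Along a sorted partition its increments therefore all
  have the same sign, and for same-sign reals the sum of squares is at most the square of the
  sum, which telescopes to the total increment. Summing over coordinates gives the first
  inequality; Cauchy-Schwarz over the at most \<open>N\<close> summands turns it into the second.\<close>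

lemma sum_power2_le_power2_sum:
  fixes f :: "'a \<Rightarrow> 'b::linordered_semidom"
  assumes "\<And>x. x \<in> A \<Longrightarrow> 0 \<le> f x"
  shows "(\<Sum>x\<in>A. (f x)\<^sup>2) \<le> (\<Sum>x\<in>A. f x)\<^sup>2"
  using assms
proof (induction A rule: infinite_finite_induct)
  case (insert a A)
  have "(\<Sum>x\<in>insert a A. (f x)\<^sup>2) \<le> (f a)\<^sup>2 + (\<Sum>x\<in>A. f x)\<^sup>2"
    using insert by simp
  also have "\<dots> \<le> (f a + (\<Sum>x\<in>A. f x))\<^sup>2"
    using insert.prems by (simp add: power2_sum sum_nonneg)
  finally show ?case
    using insert.hyps by simp
qed simp_all

lemma sum_power2_diff_le_monotone:
  fixes u :: "nat \<Rightarrow> real"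
  assumes "(\<forall>k\<in>{m..<n}. u k \<le> u (Suc k)) \<or> (\<forall>k\<in>{m..<n}. u (Suc k) \<le> u k)"
  shows "(\<Sum>k=m..<n. (u k - u (Suc k))\<^sup>2) \<le> (u m - u n)\<^sup>2"
proof (cases "m \<le> n")
  case True
  from assms show ?thesis
  proof
    assume "\<forall>k\<in>{m..<n}. u k \<le> u (Suc k)"
    then have "(\<Sum>k=m..<n. (u (Suc k) - u k)\<^sup>2) \<le> (\<Sum>k=m..<n. u (Suc k) - u k)\<^sup>2"
      by (intro sum_power2_le_power2_sum) simp
    then show ?thesis
      using True by (simp add: sum_Suc_diff' power2_commute)
  next
    assume "\<forall>k\<in>{m..<n}. u (Suc k) \<le> u k"
    then have "(\<Sum>k=m..<n. (u k - u (Suc k))\<^sup>2) \<le> (\<Sum>k=m..<n. u k - u (Suc k))\<^sup>2"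
      by (intro sum_power2_le_power2_sum) simp
    moreover have "(\<Sum>k=m..<n. u k - u (Suc k)) = u m - u n"
      using sum_Suc_diff'[OF True, of "- u"] by simp
    ultimately show ?thesis
      by simp
  qed
qed simp

lemma mono_or_antimono_max_affine:
  fixes a b :: real
  shows "mono (\<lambda>s. max ((1 - s) * a + s * b) 0) \<or> antimono (\<lambda>s. max ((1 - s) * a + s * b) 0)"
proof (cases "a \<le> b")
  case True
  have "(1 - s) * a + s * b \<le> (1 - s') * a + s' * b" if "s \<le> s'" for s s'
    using mult_right_mono[OF that, of "b - a"] True by (simp add: algebra_simps)
  then show ?thesis
    by (auto intro!: monoI max.mono)
next
  case False
  have "(1 - s') * a + s' * b \<le> (1 - s) * a + s * b" if "s \<le> s'" for s s'
    using mult_right_mono[OF that, of "a - b"] False by (simp add: algebra_simps)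
  then show ?thesis
    by (auto intro!: antimonoI max.mono)
qed

lemma relu_seg_component:
  "relu (W *v seg x1 x2 s) $ i = max ((1 - s) * (W *v x1) $ i + s * (W *v x2) $ i) 0"
  by (simp add: relu_def seg_def matrix_vector_right_distrib matrix_vector_mult_scaleR)

lemma power2_norm_vec: "(norm (x :: real ^ 'm))\<^sup>2 = (\<Sum>i\<in>UNIV. (x $ i)\<^sup>2)"
  by (simp only: power2_norm_eq_inner inner_vec_def) (simp add: power2_eq_square)

lemma sum_power2_norm_relu_seg_le:
  fixes W :: "real ^ 'n ^ 'm" and x1 x2 :: "real ^ 'n" and t :: "nat \<Rightarrow> real"
  assumes "\<forall>k\<in>{m..<n}. t k \<le> t (Suc k)"
  defines "v k \<equiv> relu (W *v seg x1 x2 (t k))"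
  shows "(\<Sum>k=m..<n. (norm (v k - v (Suc k)))\<^sup>2) \<le> (norm (v m - v n))\<^sup>2"
proof -
  have coordinate: "(\<Sum>k=m..<n. (v k $ i - v (Suc k) $ i)\<^sup>2) \<le> (v m $ i - v n $ i)\<^sup>2" for i
  proof (rule sum_power2_diff_le_monotone)
    define g where "g s = max ((1 - s) * (W *v x1) $ i + s * (W *v x2) $ i) 0" for s
    have "v k $ i = g (t k)" for k
      by (simp add: v_def g_def relu_seg_component)
    then show "(\<forall>k\<in>{m..<n}. v k $ i \<le> v (Suc k) $ i) \<or> (\<forall>k\<in>{m..<n}. v (Suc k) $ i \<le> v k $ i)"
      using mono_or_antimono_max_affine[of "(W *v x1) $ i" "(W *v x2) $ i", folded g_def] assms
      by (auto dest: monoD antimonoD)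
  qed
  have "(\<Sum>k=m..<n. (norm (v k - v (Suc k)))\<^sup>2) = (\<Sum>i\<in>UNIV. \<Sum>k=m..<n. (v k $ i - v (Suc k) $ i)\<^sup>2)"
    by (simp add: power2_norm_vec sum.swap[of _ UNIV])
  also have "\<dots> \<le> (\<Sum>i\<in>UNIV. (v m $ i - v n $ i)\<^sup>2)"
    by (intro sum_mono coordinate)
  also have "\<dots> = (norm (v m - v n))\<^sup>2"
    by (simp add: power2_norm_vec)
  finally show ?thesis .
qed

lemma sum_le_sqrt_card_mult:
  fixes f :: "'a \<Rightarrow> real"
  assumes "(\<Sum>x\<in>A. (f x)\<^sup>2) \<le> D\<^sup>2" and "0 \<le> D" and "card A \<le> c"
  shows "(\<Sum>x\<in>A. f x) \<le> sqrt c * D"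
proof (rule power2_le_imp_le)
  have "(\<Sum>x\<in>A. f x)\<^sup>2 \<le> (\<Sum>x\<in>A. (f x)\<^sup>2) * card A"
    by (rule sum_squared_le_sum_of_squares)
  also have "\<dots> \<le> D\<^sup>2 * c"
    using assms by (intro mult_mono) (auto simp: sum_nonneg)
  finally show "(\<Sum>x\<in>A. f x)\<^sup>2 \<le> (sqrt c * D)\<^sup>2"
    using assms(3) by (simp add: power_mult_distrib mult.commute)
  show "0 \<le> sqrt c * D"
    using assms(2) by simp
qed

theorem lemma15:
  fixes W :: "real ^ 'n ^ 'm" and x1 x2 :: "real ^ 'n"
    and t :: "nat \<Rightarrow> real" and N :: nat
  assumes "t 1 = 0" and "t N = 1"
    and "\<And>k. 1 \<le> k \<Longrightarrow> k < N \<Longrightarrow> t k \<le> t (Suc k)"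
  shows "(\<Sum>k=1..N-1. (norm (relu (W *v seg x1 x2 (t k)) - relu (W *v seg x1 x2 (t (Suc k)))))\<^sup>2)
           \<le> (norm (relu (W *v x1) - relu (W *v x2)))\<^sup>2
      \<and> (\<Sum>k=1..N-1. norm (relu (W *v seg x1 x2 (t k)) - relu (W *v seg x1 x2 (t (Suc k)))))
           \<le> sqrt (real N) * norm (relu (W *v x1) - relu (W *v x2))"
proof -
  define v where "v k = relu (W *v seg x1 x2 (t k))" for k
  have endpoints: "v 1 = relu (W *v x1)" "v N = relu (W *v x2)"
    using assms(1,2) by (simp_all add: v_def seg_def)
  have partition: "{1..N-1} = {1..<N}"
    by auto
  have squares: "(\<Sum>k=1..N-1. (norm (v k - v (Suc k)))\<^sup>2) \<le> (norm (v 1 - v N))\<^sup>2"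
    unfolding partition v_def using assms(3) by (intro sum_power2_norm_relu_seg_le) simp
  moreover have "(\<Sum>k=1..N-1. norm (v k - v (Suc k))) \<le> sqrt (real N) * norm (v 1 - v N)"
    using squares by (rule sum_le_sqrt_card_mult) auto
  ultimately show ?thesis
    by (simp only: v_def [symmetric] endpoints)
qed

end
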